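(* Let $\gamma=(\gamma_1,\dots,\gamma_b)$ be a parallel map on $V=V_1\oplus\cdots\oplus V_b$, $V_i\cong(\mathbb F_2)^m$, with $0\gamma=0$. Let $U$ be a subspace of $V$ of dimension $n-1$. Suppose that for every $i\notin J_U$, $\gamma_i$ is differentially $2^r$-uniform with $r<m$ and strongly $(r-1)$-anti-invariant, and for every $j\in J_U$, $\gamma_j$ is differentially $2^r$-uniform with $r<m-1$ and strongly $r$-anti-invariant. If $\gamma$ maps $\mathcal L(W)$ onto a non-trivial partition $\mathcal{LA}_U(W_1|W_2)$, then $W,W_1,W_2$ are walls and $W=W_1=W_2$; in particular $\mathcal{LA}_U(W_1|W_2)$ is linear.
   Context: Let $m,b>1$, $n=mb$, $V=(\mathbb F_2)^n=V_1\oplus\cdots\oplus V_b$, $V_i\cong(\mathbb F_2)^m$. Permutations act on the right. A parallel map is $\gamma\in\mathrm{Sym}(V)$ with $(v_1\oplus\cdots\oplus v_b)\gamma=v_1\gamma_1\oplus\cdots\oplus v_b\gamma_b$, $\gamma_i\in\mathrm{Sym}(V_i)$. A wall is $\bigoplus_{i\in I}V_i$ with $\emptyset\ne I\subsetneq\{1,\dots,b\}$. For a subspace $U$ of dimension $n-1$, $J_U=\{j: V_j\cap U\subsetneq V_j\}$. $f:(\mathbb F_2)^m\to(\mathbb F_2)^m$ is differentially $\delta$-uniform if $\delta=\max_{a\ne0,b}|\{x:f(x+a)+f(x)=b\}|$; for $f(0)=0$, $f$ is strongly $s$-anti-invariant if for all subspaces $U',W'$ of $(\mathbb F_2)^m$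 with $f(U')=W'$, either $\dim U'=\dim W'<m-s$ or $U'=W'=(\mathbb F_2)^m$. A permutation maps a partition $\mathcal A$ onto $\mathcal B$ if it sends the blocks of $\mathcal A$ exactly onto the blocks of $\mathcal B$; trivial partitions are the singleton partition and $\{V\}$. $\mathcal L(W)=\{W+v:v\in V\}$. For subspaces $W_1,W_2\subseteq U$, $\mathcal{LA}_U(W_1|W_2)=\{W_1+v:v\in U\}\cup\{(W_2+\bar v)+v:v\in U\}$ for any $\bar v\in V\setminus U$. *)

theory Defs
  imports Main "HOL-Library.Z2"
begin

text \<open>The space (F_2)^k is modelled as the set of coordinate functions
  nat => bit (bit = the field F_2) vanishing outside {0..<k}.\<close>

definition Vec :: "nat \<Rightarrow> (nat \<Rightarrow> bit) set" where
  "Vec k = {x. \<forall>i\<ge>k. x i = 0}"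

definition vzero :: "nat \<Rightarrow> bit" where
  "vzero = (\<lambda>_. 0)"

definition vadd :: "(nat \<Rightarrow> bit) \<Rightarrow> (nat \<Rightarrow> bit) \<Rightarrow> (nat \<Rightarrow> bit)" where
  "vadd x y = (\<lambda>i. x i + y i)"

text \<open>Subspace of (F_2)^k: over F_2 the only scalars are 0 and 1, so a subspace is
  a subset containing 0 and closed under addition.\<close>
definition f2subspace :: "nat \<Rightarrow> (nat \<Rightarrow> bit) set \<Rightarrow> bool" where
  "f2subspace k U \<longleftrightarrow> U \<subseteq> Vec k \<and> vzero \<in> U \<and> (\<forall>x\<in>U. \<forall>y\<in>U. vadd x y \<in> U)"

definition f2dim :: "(nat \<Rightarrow> bit) set \<Rightarrow> nat" where
  "f2dim U = (THE d. card U = 2 ^ d)"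

definition coset :: "(nat \<Rightarrow> bit) set \<Rightarrow> (nat \<Rightarrow> bit) \<Rightarrow> (nat \<Rightarrow> bit) set" where
  "coset W v = (\<lambda>w. vadd w v) ` W"

text \<open>Block structure: V = (F_2)^(m*b) = V_0 + ... + V_(b-1), block j occupying
  coordinates j*m ..< (j+1)*m (blocks are 0-indexed here).\<close>

definition block_proj :: "nat \<Rightarrow> nat \<Rightarrow> (nat \<Rightarrow> bit) \<Rightarrow> (nat \<Rightarrow> bit)" where
  "block_proj m j x = (\<lambda>k. if k < m then x (j * m + k) else 0)"

definition parallel :: "nat \<Rightarrow> nat \<Rightarrow> (nat \<Rightarrow> (nat \<Rightarrow> bit) \<Rightarrow> (nat \<Rightarrow> bit))
    \<Rightarrow> (nat \<Rightarrow> bit) \<Rightarrow> (nat \<Rightarrow> bit)" where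
  "parallel m b g x = (\<lambda>k. if k < m * b then g (k div m) (block_proj m (k div m) x) (k mod m) else 0)"

definition blocks :: "nat \<Rightarrow> nat \<Rightarrow> nat set \<Rightarrow> (nat \<Rightarrow> bit) set" where
  "blocks m b I = {x \<in> Vec (m * b). \<forall>k. x k \<noteq> 0 \<longrightarrow> k div m \<in> I}"

definition Vblock :: "nat \<Rightarrow> nat \<Rightarrow> nat \<Rightarrow> (nat \<Rightarrow> bit) set" where
  "Vblock m b j = blocks m b {j}"

definition is_wall :: "nat \<Rightarrow> nat \<Rightarrow> (nat \<Rightarrow> bit) set \<Rightarrow> bool" where
  "is_wall m b W \<longleftrightarrow> (\<exists>I. I \<subseteq> {..<b} \<and> I \<noteq> {} \<and> I \<noteq> {..<b} \<and> W = blocks m b I)"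

definition J_set :: "nat \<Rightarrow> nat \<Rightarrow> (nat \<Rightarrow> bit) set \<Rightarrow> nat set" where
  "J_set m b U = {j. j < b \<and> Vblock m b j \<inter> U \<subset> Vblock m b j}"

definition diff_uniform :: "nat \<Rightarrow> ((nat \<Rightarrow> bit) \<Rightarrow> (nat \<Rightarrow> bit)) \<Rightarrow> nat \<Rightarrow> bool" where
  "diff_uniform m f \<delta> \<longleftrightarrow>
     \<delta> = Max {card {x \<in> Vec m. vadd (f (vadd x a)) (f x) = c} | a c.
                 a \<in> Vec m \<and> a \<noteq> vzero \<and> c \<in> Vec m}"

text \<open>Strong s-anti-invariance (for f with f 0 = 0); s is an integer so that s = r - 1
  is meaningful also for r = 0.\<close>
definition strongly_anti_invariant :: "nat \<Rightarrow> ((nat \<Rightarrow> bit) \<Rightarrow> (nat \<Rightarrow> bit)) \<Rightarrow> int \<Rightarrow> bool" where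
  "strongly_anti_invariant m f s \<longleftrightarrow>
     (\<forall>U' W'. f2subspace m U' \<and> f2subspace m W' \<and> f ` U' = W' \<longrightarrow>
        (f2dim U' = f2dim W' \<and> int (f2dim U') < int m - s) \<or> (U' = Vec m \<and> W' = Vec m))"

definition maps_partition :: "('a \<Rightarrow> 'a) \<Rightarrow> 'a set set \<Rightarrow> 'a set set \<Rightarrow> bool" where
  "maps_partition \<gamma> A B \<longleftrightarrow> (\<lambda>X. \<gamma> ` X) ` A = B"

definition trivial_partition :: "'a set \<Rightarrow> 'a set set \<Rightarrow> bool" where
  "trivial_partition V P \<longleftrightarrow> P = (\<lambda>v. {v}) ` V \<or> P = {V}"

definition Lpart :: "nat \<Rightarrow> (nat \<Rightarrow> bit) set \<Rightarrow> (nat \<Rightarrow> bit) set set" where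
  "Lpart n W = coset W ` Vec n"

definition LApart :: "(nat \<Rightarrow> bit) set \<Rightarrow> (nat \<Rightarrow> bit) set \<Rightarrow> (nat \<Rightarrow> bit) set
    \<Rightarrow> (nat \<Rightarrow> bit) \<Rightarrow> (nat \<Rightarrow> bit) set set" where
  "LApart U W1 W2 vbar = coset W1 ` U \<union> coset (coset W2 vbar) ` U"

definition linear_partition :: "nat \<Rightarrow> (nat \<Rightarrow> bit) set set \<Rightarrow> bool" where
  "linear_partition n P \<longleftrightarrow> (\<exists>X. f2subspace n X \<and> P = Lpart n X)"

end

(* Let A_j and B_j be the slices of W and W1 in block j, and U_j that of U.
   Since every block of LA_U(W1|W2) meeting U is a coset of W1, the parallel map
   \<gamma> sends each coset W + v with \<gamma> v in U onto W1 + \<gamma> v. Hence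
   \<gamma> W = W1, \<gamma>_j A_j = B_j, and for w in W with j-th component a the
   derivative x |-> \<gamma>_j (x + a) + \<gamma>_j x maps the \<gamma>_j-preimage of U_j
   into B_j + \<gamma>_j a, and into B_j - {0} when a is a nonzero element of A_j.
   Differential 2^r-uniformity turns this into |U_j| \<le> 2^r |B_j| and
   |U_j| \<le> 2^r (|B_j| - 1), while U_j is all of (F_2)^m off J_U and has index
   at most 2 on J_U. Strong anti-invariance bounds dim B_j unless
   A_j = B_j = (F_2)^m; comparing the bounds shows that W vanishes on the blocks
   in J_U and contains every block it touches, i.e. W is a sum of blocks.
   Parallel maps permute the cosets of a sum of blocks, so LA_U(W1|W2) = L(W),
   whence W1 = W2 = W, and non-triviality of the partition makes W a wall. *)

theory Submission imports Defs "HOL-Computational_Algebra.Primes"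
begin

(* Z2 rewrites + on bit to xor; keep it as field addition so that ac_simps apply. *)
declare add_bit_eq_xor [simp del]

lemma bit_add_self [simp]: "(x::bit) + x = 0"
  by (cases x) simp_all

lemma vadd_comm: "vadd x y = vadd y x"
  unfolding vadd_def by (simp add: add.commute)

lemma vadd_assoc: "vadd (vadd x y) z = vadd x (vadd y z)"
  unfolding vadd_def by (simp add: add.assoc)

lemma vadd_left_comm: "vadd x (vadd y z) = vadd y (vadd x z)"
  unfolding vadd_def by (simp add: add.left_commute)

lemma vadd_right_comm: "vadd (vadd x y) z = vadd (vadd x z) y"
  unfolding vadd_def by (simp add: ac_simps)

lemmas vadd_ac = vadd_assoc vadd_comm vadd_left_comm

lemma vadd_self [simp]: "vadd x x = vzero"
  unfolding vadd_def vzero_def by simp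

lemma vadd_vzero [simp]: "vadd x vzero = x" "vadd vzero x = x"
  unfolding vadd_def vzero_def by simp_all

lemma vzero_apply: "vzero k = 0"
  by (simp add: vzero_def)

lemma vadd_cancel [simp]: "vadd x (vadd x y) = y" "vadd (vadd y x) x = y"
  by (simp_all add: vadd_assoc[symmetric] vadd_assoc)

lemma vadd_right_cancel_iff [simp]: "vadd x v = vadd y v \<longleftrightarrow> x = y"
  by (metis vadd_cancel(2))

lemma vadd_eq_vzero_iff: "vadd x y = vzero \<longleftrightarrow> x = y"
  using vadd_right_cancel_iff[of x y y] by simp

lemma Vec_vadd: "x \<in> Vec k \<Longrightarrow> y \<in> Vec k \<Longrightarrow> vadd x y \<in> Vec k"
  unfolding Vec_def vadd_def by simp

lemma vzero_in_Vec [simp]: "vzero \<in> Vec k"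
  unfolding Vec_def vzero_def by simp

lemma Vec_support_less: "x \<in> Vec k \<Longrightarrow> x i \<noteq> 0 \<Longrightarrow> i < k"
  unfolding Vec_def using not_le by blast

lemma bij_betw_Vec_Pow: "bij_betw (\<lambda>x. {i. x i = 1}) (Vec k) (Pow {..<k})"
proof (rule bij_betw_imageI)
  show "inj_on (\<lambda>x. {i. x i = 1}) (Vec k)"
  proof (rule inj_onI)
    fix x y :: "nat \<Rightarrow> bit" assume "{i. x i = 1} = {i. y i = 1}"
    then have "x i = 1 \<longleftrightarrow> y i = 1" for i by blast
    then show "x = y" by (metis bit_not_one_iff ext)
  qed
  show "(\<lambda>x. {i. x i = 1}) ` Vec k = Pow {..<k}"
  proof (intro equalityI subsetI)
    fix S assume "S \<in> (\<lambda>x. {i. x i = 1}) ` Vec k"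
    then show "S \<in> Pow {..<k}" using Vec_support_less by fastforce
  next
    fix S assume S: "S \<in> Pow {..<k}"
    define x where "x i = (if i \<in> S then 1 else 0 :: bit)" for i
    have "x \<in> Vec k" using S by (auto simp: Vec_def x_def)
    moreover have "S = {i. x i = 1}" by (simp add: x_def)
    ultimately show "S \<in> (\<lambda>x. {i. x i = 1}) ` Vec k" by blast
  qed
qed

lemma card_Vec: "card (Vec k) = 2 ^ k"
  using bij_betw_same_card[OF bij_betw_Vec_Pow] by (simp add: card_Pow)

lemma finite_Vec [simp]: "finite (Vec k)"
  using bij_betw_finite[OF bij_betw_Vec_Pow] by simp

lemma f2subspace_finite: "f2subspace k S \<Longrightarrow> finite S"
  unfolding f2subspace_def using finite_subset finite_Vec by blast

lemma f2subspace_vadd: "f2subspace k S \<Longrightarrow> x \<in> S \<Longrightarrow> y \<in> S \<Longrightarrow> vadd x y \<in> S"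
  unfolding f2subspace_def by blast

lemma mem_coset_iff: "x \<in> coset S v \<longleftrightarrow> vadd x v \<in> S"
  unfolding coset_def by (auto intro: image_eqI[of _ _ "vadd x v"])

lemma card_coset: "card (coset S v) = card S"
  unfolding coset_def by (rule card_image) (auto simp: inj_on_def)

lemma finite_coset: "finite S \<Longrightarrow> finite (coset S v)"
  unfolding coset_def by simp

lemma coset_vzero [simp]: "coset S vzero = S"
  unfolding coset_def by simp

lemma coset_coset: "coset (coset S a) c = coset S (vadd a c)"
  by (auto simp: mem_coset_iff vadd_ac)

lemma coset_cancel: "coset S a = coset T a \<Longrightarrow> S = T"
  by (metis coset_coset coset_vzero vadd_self)

lemma self_in_coset: "f2subspace k S \<Longrightarrow> v \<in> coset S v"
  by (simp add: mem_coset_iff f2subspace_def)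

lemma coset_eq_of_mem:
  assumes S: "f2subspace k S" and x: "x \<in> coset S v"
  shows "coset S v = coset S x"
proof -
  have d: "vadd x v \<in> S" using x by (simp add: mem_coset_iff)
  have "vadd y x = vadd (vadd y v) (vadd x v)" "vadd y v = vadd (vadd y x) (vadd x v)" for y
    by (simp_all add: vadd_ac)
  then have "vadd y v \<in> S \<longleftrightarrow> vadd y x \<in> S" for y
    using f2subspace_vadd[OF S _ d] by metis
  then show ?thesis by (auto simp: mem_coset_iff)
qed

lemma coset_subset_Vec: "f2subspace k S \<Longrightarrow> v \<in> Vec k \<Longrightarrow> coset S v \<subseteq> Vec k"
  unfolding f2subspace_def coset_def by (auto intro: Vec_vadd)

lemma f2subspace_card_pow2:
  assumes S: "f2subspace k S"
  shows "\<exists>d. card S = 2 ^ d"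
proof -
  define C where "C = coset S ` Vec k"
  have cover: "\<Union>C = Vec k"
    using coset_subset_Vec[OF S] self_in_coset[OF S] by (auto simp: C_def)
  have disjoint: "c1 \<inter> c2 = {}" if c: "c1 \<in> C" "c2 \<in> C" "c1 \<noteq> c2" for c1 c2
  proof -
    obtain u v where "c1 = coset S u" "c2 = coset S v" using c by (auto simp: C_def)
    then show ?thesis using c(3) by (metis disjoint_iff coset_eq_of_mem[OF S])
  qed
  have "card S * card C = card (\<Union>C)"
    by (rule card_partition) (use cover disjoint in \<open>auto simp: C_def card_coset\<close>)
  then have "card S * card C = 2 ^ k" by (simp add: cover card_Vec)
  then have "card S dvd 2 ^ k" by (metis dvd_triv_left)
  then show ?thesis using divides_primepow_nat[of 2] by auto
qed

lemma card_f2dim: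
  assumes "f2subspace k S"
  shows "card S = 2 ^ f2dim S"
proof -
  obtain d where d: "card S = 2 ^ d" using f2subspace_card_pow2[OF assms] by blast
  have "f2dim S = d" unfolding f2dim_def by (rule the_equality) (use d in \<open>auto simp: power_inject_exp\<close>)
  then show ?thesis using d by simp
qed

lemma hyperplane_vadd_outside:
  assumes U: "f2subspace k U" and card_U: "2 * card U = 2 ^ k"
    and x: "x \<in> Vec k - U" and y: "y \<in> Vec k - U"
  shows "vadd x y \<in> U"
proof -
  have "U \<inter> coset U x = {}"
    using x f2subspace_vadd[OF U] by (fastforce simp: mem_coset_iff)
  then have "card (U \<union> coset U x) = 2 ^ k"
    using card_U f2subspace_finite[OF U] by (simp add: card_Un_disjoint finite_coset card_coset)
  moreover have "U \<union> coset U x \<subseteq> Vec k"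
    using U coset_subset_Vec[OF U] x by (auto simp: f2subspace_def)
  ultimately have "U \<union> coset U x = Vec k"
    by (simp add: card_Vec card_subset_eq)
  then show ?thesis using y by (auto simp: mem_coset_iff vadd_comm)
qed

lemma card_index_two_subspace:
  assumes H: "f2subspace k H"
    and outside: "\<And>x y. x \<in> Vec k - H \<Longrightarrow> y \<in> Vec k - H \<Longrightarrow> vadd x y \<in> H"
  shows "2 ^ k \<le> 2 * card H"
proof -
  have HV: "H \<subseteq> Vec k" using H by (simp add: f2subspace_def)
  have "card (Vec k - H) \<le> card H"
  proof (cases "Vec k \<subseteq> H")
    case False
    then obtain y where y: "y \<in> Vec k - H" by blast
    have "(\<lambda>x. vadd x y) ` (Vec k - H) \<subseteq> H" using outside y by blast
    moreover have "inj_on (\<lambda>x. vadd x y) (Vec k - H)" by (simp add: inj_on_def)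
    ultimately show ?thesis
      using card_inj_on_le f2subspace_finite[OF H] by blast
  qed (simp add: Diff_eq_empty_iff[THEN iffD2])
  then show ?thesis
    using card_Diff_subset[OF f2subspace_finite[OF H] HV] card_mono[OF finite_Vec HV]
    by (simp add: card_Vec)
qed

definition block_emb :: "nat \<Rightarrow> nat \<Rightarrow> nat \<Rightarrow> (nat \<Rightarrow> bit) \<Rightarrow> (nat \<Rightarrow> bit)" where
  "block_emb m b j z = (\<lambda>k. if k < m * b \<and> k div m = j then z (k mod m) else 0)"

definition block_slice :: "nat \<Rightarrow> nat \<Rightarrow> (nat \<Rightarrow> bit) set \<Rightarrow> nat \<Rightarrow> (nat \<Rightarrow> bit) set" where
  "block_slice m b S j = {z \<in> Vec m. block_emb m b j z \<in> S}"

definition block_support :: "nat \<Rightarrow> nat \<Rightarrow> (nat \<Rightarrow> bit) set \<Rightarrow> nat set" where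
  "block_support m b S = {j. j < b \<and> (\<exists>x\<in>S. block_proj m j x \<noteq> vzero)}"

lemma block_proj_Vec: "block_proj m j x \<in> Vec m"
  unfolding block_proj_def Vec_def by simp

lemma block_emb_Vec: "block_emb m b j z \<in> Vec (m * b)"
  unfolding block_emb_def Vec_def by simp

lemma block_index_less:
  assumes "j < b" "k < m"
  shows "j * m + k < m * (b::nat)"
proof -
  have "j * m + k < (j + 1) * m" using assms(2) by simp
  also have "\<dots> \<le> b * m" using assms(1) by (intro mult_right_mono) auto
  finally show ?thesis by (simp add: mult.commute)
qed

lemma block_of_coord_less: "k < m * b \<Longrightarrow> k div m < (b::nat)"
  by (simp add: less_mult_imp_div_less mult.commute)

lemma block_proj_block_emb [simp]:
  "j < b \<Longrightarrow> z \<in> Vec m \<Longrightarrow> block_proj m j (block_emb m b j z) = z"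
  unfolding block_proj_def block_emb_def by (rule ext) (auto simp: block_index_less Vec_def)

lemma block_proj_block_emb_other: "i \<noteq> j \<Longrightarrow> block_proj m i (block_emb m b j z) = vzero"
  unfolding block_proj_def block_emb_def vzero_def by (rule ext) auto

lemma block_emb_vadd: "block_emb m b j (vadd y z) = vadd (block_emb m b j y) (block_emb m b j z)"
  unfolding block_emb_def vadd_def by (rule ext) auto

lemma block_emb_vzero [simp]: "block_emb m b j vzero = vzero"
  unfolding block_emb_def vzero_def by (rule ext) auto

lemma block_proj_vadd: "block_proj m j (vadd x y) = vadd (block_proj m j x) (block_proj m j y)"
  unfolding block_proj_def vadd_def by (rule ext) auto

lemma block_proj_vzero [simp]: "block_proj m j vzero = vzero"
  unfolding block_proj_def vzero_def by (rule ext) auto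

lemma coord_eq_block_proj: "0 < m \<Longrightarrow> x k = block_proj m (k div m) x (k mod m)"
  unfolding block_proj_def by (simp add: mult.commute)

lemma block_emb_block_proj_apply:
  "0 < m \<Longrightarrow> block_emb m b j (block_proj m j x) k = (if k < m * b \<and> k div m = j then x k else 0)"
  unfolding block_emb_def using coord_eq_block_proj[of m x k] by auto

lemma Vec_eqI_blocks:
  assumes "0 < m" "x \<in> Vec (m * b)" "y \<in> Vec (m * b)"
    and "\<And>i. i < b \<Longrightarrow> block_proj m i x = block_proj m i y"
  shows "x = y"
proof
  fix k
  show "x k = y k"
  proof (cases "k < m * b")
    case True
    then show ?thesis
      using assms(4)[OF block_of_coord_less] coord_eq_block_proj[OF assms(1)] by metis
  next
    case False
    then show ?thesis using assms(2,3) by (simp add: Vec_def)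
  qed
qed

lemma Vblock_eq_image_block_emb:
  assumes "0 < m" "j < b"
  shows "Vblock m b j = block_emb m b j ` Vec m"
proof (intro equalityI subsetI)
  fix x assume x: "x \<in> Vblock m b j"
  then have "x = block_emb m b j (block_proj m j x)"
    using assms(1) by (intro ext) (auto simp: Vblock_def blocks_def Vec_def block_emb_block_proj_apply)
  then show "x \<in> block_emb m b j ` Vec m" using block_proj_Vec by blast
qed (auto simp: Vblock_def blocks_def block_emb_Vec, simp_all add: block_emb_def split: if_splits)

lemma block_slice_eq_Vec_iff:
  assumes "0 < m" "j < b"
  shows "block_slice m b U j = Vec m \<longleftrightarrow> j \<notin> J_set m b U"
  using assms Vblock_eq_image_block_emb[OF assms]
  by (auto simp: J_set_def block_slice_def)

lemma f2subspace_block_slice: "f2subspace (m * b) S \<Longrightarrow> f2subspace m (block_slice m b S j)"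
  unfolding f2subspace_def block_slice_def by (auto simp: block_emb_vadd Vec_vadd)

lemma blocks_empty: "blocks m b {} = {vzero}"
  by (auto simp: blocks_def vzero_def Vec_def)

lemma blocks_all: "blocks m b {..<b} = Vec (m * b)"
  unfolding blocks_def lessThan_iff using Vec_support_less block_of_coord_less by blast

lemma blocks_subset_subspace:
  assumes m: "0 < m" and W: "f2subspace (m * b) W" and F: "finite F"
    and full: "\<And>j. j \<in> F \<Longrightarrow> j < b \<and> block_slice m b W j = Vec m"
  shows "blocks m b F \<subseteq> W"
  using F full
proof (induction F rule: finite_induct)
  case empty
  then show ?case using W by (simp add: blocks_empty f2subspace_def)
next
  case (insert j F)
  show ?case
  proof
    fix x assume x: "x \<in> blocks m b (insert j F)"
    define e where "e = block_emb m b j (block_proj m j x)"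
    have "e \<in> W"
      using insert.prems[of j] block_proj_Vec by (auto simp: e_def block_slice_def)
    moreover have "vadd x e \<in> blocks m b F"
      using x m by (auto simp: blocks_def e_def vadd_def block_emb_block_proj_apply Vec_def)
    then have "vadd x e \<in> W" using insert by blast
    ultimately show "x \<in> W" using f2subspace_vadd[OF W] vadd_cancel(2) by metis
  qed
qed

lemma subspace_eq_blocks_support:
  assumes m: "0 < m" and W: "f2subspace (m * b) W"
    and full: "\<And>j. j \<in> block_support m b W \<Longrightarrow> block_slice m b W j = Vec m"
  shows "W = blocks m b (block_support m b W)"
proof
  show "blocks m b (block_support m b W) \<subseteq> W"
    by (rule blocks_subset_subspace[OF m W]) (use full in \<open>auto simp: block_support_def\<close>)
  show "W \<subseteq> blocks m b (block_support m b W)"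
  proof
    fix w assume w: "w \<in> W"
    then have wV: "w \<in> Vec (m * b)" using W by (auto simp: f2subspace_def)
    have "k div m \<in> block_support m b W" if k: "w k \<noteq> 0" for k
    proof -
      have "block_proj m (k div m) w \<noteq> vzero"
        using k coord_eq_block_proj[OF m, of w k] by (metis vzero_def)
      then show ?thesis
        using w block_of_coord_less[OF Vec_support_less[OF wV k]] by (auto simp: block_support_def)
    qed
    then show "w \<in> blocks m b (block_support m b W)" using wV by (simp add: blocks_def)
  qed
qed

lemma f2subspace_blocks: "f2subspace (m * b) (blocks m b I)"
proof -
  have "vadd x y k \<noteq> 0 \<Longrightarrow> x k \<noteq> 0 \<or> y k \<noteq> 0" for x y :: "nat \<Rightarrow> bit" and k
    by (auto simp: vadd_def)
  then show ?thesis unfolding f2subspace_def blocks_def by (auto simp: Vec_vadd vzero_apply) metis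
qed

lemma block_proj_blocks_outside: "x \<in> blocks m b I \<Longrightarrow> i \<notin> I \<Longrightarrow> block_proj m i x = vzero"
  unfolding blocks_def block_proj_def vzero_def by (rule ext) (auto simp: add.commute)

lemma parallel_Vec: "parallel m b g x \<in> Vec (m * b)"
  unfolding parallel_def Vec_def by simp

lemma parallel_apply:
  "k < m * b \<Longrightarrow> parallel m b g x k = g (k div m) (block_proj m (k div m) x) (k mod m)"
  by (simp add: parallel_def)

lemma block_proj_parallel:
  assumes "i < b" "g i ` Vec m \<subseteq> Vec m"
  shows "block_proj m i (parallel m b g x) = g i (block_proj m i x)"
proof
  fix k
  have "g i (block_proj m i x) \<in> Vec m" using assms(2) block_proj_Vec by blast
  then show "block_proj m i (parallel m b g x) k = g i (block_proj m i x) k"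
    using assms(1) by (cases "k < m") (auto simp: block_proj_def parallel_apply block_index_less Vec_def)
qed

lemma parallel_vzero_components:
  assumes "i < b" "g i ` Vec m \<subseteq> Vec m" "parallel m b g vzero = vzero"
  shows "g i vzero = vzero"
  using block_proj_parallel[where g = g and x = vzero, OF assms(1,2)] assms(3) by simp

lemma vadd_parallel_single_block:
  assumes "j < b" "\<And>i. i < b \<Longrightarrow> i \<noteq> j \<Longrightarrow> block_proj m i x = block_proj m i y"
  shows "vadd (parallel m b g x) (parallel m b g y)
    = block_emb m b j (vadd (g j (block_proj m j x)) (g j (block_proj m j y)))"
proof
  fix k
  show "vadd (parallel m b g x) (parallel m b g y) k
    = block_emb m b j (vadd (g j (block_proj m j x)) (g j (block_proj m j y))) k"
    using assms(2)[OF block_of_coord_less, of k]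
    by (cases "k < m * b \<and> k div m = j") (auto simp: parallel_def vadd_def block_emb_def)
qed

lemma parallel_block_emb:
  assumes "j < b" "z \<in> Vec m" "g j ` Vec m \<subseteq> Vec m" "parallel m b g vzero = vzero"
  shows "parallel m b g (block_emb m b j z) = block_emb m b j (g j z)"
proof -
  have "vadd (parallel m b g (block_emb m b j z)) (parallel m b g vzero)
      = block_emb m b j (vadd (g j z) (g j vzero))"
    using vadd_parallel_single_block[OF assms(1)] assms(1,2)
    by (simp add: block_proj_block_emb_other)
  then show ?thesis using assms parallel_vzero_components by simp
qed

lemma inj_on_parallel:
  assumes m: "0 < m" and bij: "\<And>i. i < b \<Longrightarrow> bij_betw (g i) (Vec m) (Vec m)"
  shows "inj_on (parallel m b g) (Vec (m * b))"
proof (rule inj_onI)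
  fix x y assume x: "x \<in> Vec (m * b)" and y: "y \<in> Vec (m * b)"
    and eq: "parallel m b g x = parallel m b g y"
  show "x = y"
  proof (rule Vec_eqI_blocks[OF m x y])
    fix i assume i: "i < b"
    then have "g i ` Vec m \<subseteq> Vec m" using bij by (simp add: bij_betw_def)
    then have "g i (block_proj m i x) = g i (block_proj m i y)"
      using eq block_proj_parallel[OF i] by metis
    then show "block_proj m i x = block_proj m i y"
      using bij[OF i] block_proj_Vec by (metis bij_betw_def inj_onD)
  qed
qed

lemma parallel_image_Vec:
  assumes "0 < m" "\<And>i. i < b \<Longrightarrow> bij_betw (g i) (Vec m) (Vec m)"
  shows "parallel m b g ` Vec (m * b) = Vec (m * b)"
  using parallel_Vec by (intro endo_inj_surj[OF finite_Vec _ inj_on_parallel[OF assms]]) blast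

lemma parallel_image_coset_blocks:
  assumes m: "0 < m" and bij: "\<And>i. i < b \<Longrightarrow> bij_betw (g i) (Vec m) (Vec m)"
    and v: "v \<in> Vec (m * b)"
  shows "parallel m b g ` coset (blocks m b I) v = coset (blocks m b I) (parallel m b g v)"
    (is "?P ` ?C = ?D")
proof (rule card_subset_eq)
  show "finite ?D"
    by (rule finite_coset[OF f2subspace_finite[OF f2subspace_blocks]])
  show "?P ` ?C \<subseteq> ?D"
  proof
    fix y assume "y \<in> ?P ` ?C"
    then obtain w where w: "w \<in> blocks m b I" and y: "y = ?P (vadd w v)"
      by (auto simp: coset_def)
    have "k div m \<in> I" if k: "vadd y (?P v) k \<noteq> 0" for k
    proof (rule ccontr)
      assume "k div m \<notin> I"
      then have "block_proj m (k div m) (vadd w v) = block_proj m (k div m) v"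
        using block_proj_blocks_outside[OF w] by (simp add: block_proj_vadd)
      moreover have "vadd y (?P v) \<in> Vec (m * b)" using y by (simp add: Vec_vadd parallel_Vec)
      then have "k < m * b" using Vec_support_less k by blast
      ultimately show False using k y by (simp add: vadd_def parallel_apply)
    qed
    then have "vadd y (?P v) \<in> blocks m b I"
      using y by (simp add: blocks_def Vec_vadd parallel_Vec)
    then show "y \<in> ?D" by (simp add: mem_coset_iff)
  qed
  have "?C \<subseteq> Vec (m * b)" by (rule coset_subset_Vec[OF f2subspace_blocks v])
  then show "card (?P ` ?C) = card ?D"
    using card_image[OF inj_on_subset[OF inj_on_parallel[of m b g, OF m bij]]] by (simp add: card_coset)
qed

lemma diff_uniform_card_le:
  assumes du: "diff_uniform m f d" and a: "a \<in> Vec m" "a \<noteq> vzero"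
    and X: "X \<subseteq> Vec m" and T: "T \<subseteq> Vec m"
    and derivative: "\<And>x. x \<in> X \<Longrightarrow> vadd (f (vadd x a)) (f x) \<in> T"
  shows "card X \<le> d * card T"
proof -
  define fibre where "fibre c = {x \<in> Vec m. vadd (f (vadd x a)) (f x) = c}" for c
  have card_fibre: "card (fibre c) \<le> d" if c: "c \<in> T" for c
  proof -
    define S where "S = {card {x \<in> Vec m. vadd (f (vadd x a')) (f x) = c'} | a' c'.
                           a' \<in> Vec m \<and> a' \<noteq> vzero \<and> c' \<in> Vec m}"
    have "S \<subseteq> (\<lambda>(a', c'). card {x \<in> Vec m. vadd (f (vadd x a')) (f x) = c'}) ` (Vec m \<times> Vec m)"
      by (auto simp: S_def)
    then have "finite S" by (rule finite_subset) simp
    moreover have "card (fibre c) \<in> S" using a c T by (auto simp: S_def fibre_def)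
    ultimately show ?thesis using du by (simp add: diff_uniform_def S_def)
  qed
  have finT: "finite T" by (rule finite_subset[OF T finite_Vec])
  have "X \<subseteq> (\<Union>c\<in>T. fibre c)" using X derivative by (auto simp: fibre_def)
  then have "card X \<le> card (\<Union>c\<in>T. fibre c)"
    by (rule card_mono[rotated]) (simp add: finT fibre_def)
  also have "\<dots> \<le> (\<Sum>c\<in>T. card (fibre c))" by (rule card_UN_le[OF finT])
  also have "\<dots> \<le> (\<Sum>c\<in>T. d)" by (rule sum_mono) (rule card_fibre)
  finally show ?thesis by (simp add: mult.commute)
qed

lemma two_mult_pow_mult_less_pow:
  assumes "c' < c" "c \<le> 2 ^ e" "r + e + 1 \<le> k"
  shows "2 * (2 ^ r * c') < (2::nat) ^ k"
proof -
  have "2 * (2 ^ r * c') < 2 * (2 ^ r * c)" using assms(1) by simp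
  also have "\<dots> \<le> 2 * (2 ^ r * 2 ^ e)" using assms(2) by simp
  also have "\<dots> = 2 ^ (r + e + 1)" by (simp add: power_add)
  also have "\<dots> \<le> 2 ^ k" using assms(3) by (rule power_increasing) simp
  finally show ?thesis .
qed

lemma vzero_in_block_slice: "f2subspace (m * b) S \<Longrightarrow> vzero \<in> block_slice m b S j"
  by (simp add: block_slice_def f2subspace_def)

lemma block_slice_mono: "S \<subseteq> T \<Longrightarrow> block_slice m b S j \<subseteq> block_slice m b T j"
  unfolding block_slice_def by blast

locale parallel_onto_LA =
  fixes m b :: nat and g :: "nat \<Rightarrow> (nat \<Rightarrow> bit) \<Rightarrow> (nat \<Rightarrow> bit)"
    and U W W1 W2 :: "(nat \<Rightarrow> bit) set" and vbar :: "nat \<Rightarrow> bit"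
  assumes m_pos: "0 < m"
    and bij: "\<And>i. i < b \<Longrightarrow> bij_betw (g i) (Vec m) (Vec m)"
    and parallel_vzero: "parallel m b g vzero = vzero"
    and U: "f2subspace (m * b) U" and card_U: "2 * card U = 2 ^ (m * b)"
    and W: "f2subspace (m * b) W"
    and W1: "f2subspace (m * b) W1" "W1 \<subseteq> U"
    and W2: "f2subspace (m * b) W2" "W2 \<subseteq> U"
    and vbar: "vbar \<in> Vec (m * b)" "vbar \<notin> U"
    and maps: "maps_partition (parallel m b g) (Lpart (m * b) W) (LApart U W1 W2 vbar)"
begin

abbreviation \<gamma> :: "(nat \<Rightarrow> bit) \<Rightarrow> (nat \<Rightarrow> bit)" where
  "\<gamma> \<equiv> parallel m b g"

lemma g_image: "i < b \<Longrightarrow> g i ` Vec m = Vec m"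
  using bij by (simp add: bij_betw_def)

lemma g_Vec: "i < b \<Longrightarrow> z \<in> Vec m \<Longrightarrow> g i z \<in> Vec m"
  using g_image by blast

lemma g_inj: "i < b \<Longrightarrow> inj_on (g i) (Vec m)"
  using bij by (simp add: bij_betw_def)

lemma g_vzero: "i < b \<Longrightarrow> g i vzero = vzero"
  using parallel_vzero_components g_image parallel_vzero by blast

lemma \<gamma>_block_emb: "j < b \<Longrightarrow> z \<in> Vec m \<Longrightarrow> \<gamma> (block_emb m b j z) = block_emb m b j (g j z)"
  using parallel_block_emb g_image parallel_vzero by blast

lemma inj_on_\<gamma>: "inj_on \<gamma> (Vec (m * b))"
  by (rule inj_on_parallel[of m b g, OF m_pos bij])

lemma \<gamma>_image_Vec: "\<gamma> ` Vec (m * b) = Vec (m * b)"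
  by (rule parallel_image_Vec[of m b g, OF m_pos bij])

lemma \<gamma>_image_coset_blocks:
  "v \<in> Vec (m * b) \<Longrightarrow> \<gamma> ` coset (blocks m b I) v = coset (blocks m b I) (\<gamma> v)"
  by (rule parallel_image_coset_blocks[of m b g, OF m_pos bij])

(* The blocks of the second kind lie in vbar + U and therefore miss U. *)
lemma LA_block_through_U:
  assumes X: "X \<in> LApart U W1 W2 vbar" and y: "y \<in> X" "y \<in> U"
  shows "X = coset W1 y"
proof -
  have "\<not> (u \<in> U \<and> y \<in> coset (coset W2 vbar) u)" for u
  proof
    assume u: "u \<in> U \<and> y \<in> coset (coset W2 vbar) u"
    then have "vadd (vadd y u) vbar \<in> U" using W2 by (auto simp: mem_coset_iff)
    moreover have "vadd y u \<in> U" using u y f2subspace_vadd[OF U] by blast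
    ultimately show False using vbar(2) f2subspace_vadd[OF U] vadd_cancel(1) by metis
  qed
  then show ?thesis using X y coset_eq_of_mem[OF W1(1)] by (auto simp: LApart_def)
qed

lemma image_coset_W_of_U:
  assumes v: "v \<in> Vec (m * b)" and "\<gamma> v \<in> U"
  shows "\<gamma> ` coset W v = coset W1 (\<gamma> v)"
proof (rule LA_block_through_U)
  show "\<gamma> ` coset W v \<in> LApart U W1 W2 vbar"
    using maps v by (auto simp: maps_partition_def Lpart_def)
  show "\<gamma> v \<in> \<gamma> ` coset W v" using self_in_coset[OF W] by blast
qed fact

lemma image_W: "\<gamma> ` W = W1"
  using image_coset_W_of_U[of vzero] parallel_vzero f2subspace_def U by simp

lemma image_mem_W1_iff:
  assumes x: "x \<in> Vec (m * b)"
  shows "\<gamma> x \<in> W1 \<longleftrightarrow> x \<in> W"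
proof
  assume "\<gamma> x \<in> W1"
  then obtain w where w: "w \<in> W" "\<gamma> x = \<gamma> w" using image_W by (metis imageE)
  moreover have "w \<in> Vec (m * b)" using w W by (auto simp: f2subspace_def)
  ultimately show "x \<in> W" using inj_onD[OF inj_on_\<gamma> _ x] by metis
qed (use image_W in blast)

lemma image_block_slice:
  assumes j: "j < b"
  shows "g j ` block_slice m b W j = block_slice m b W1 j"
proof -
  have iff: "g j z \<in> block_slice m b W1 j \<longleftrightarrow> z \<in> block_slice m b W j" if z: "z \<in> Vec m" for z
    using image_mem_W1_iff[OF block_emb_Vec[of m b j z]] \<gamma>_block_emb[OF j z] g_Vec[OF j z] z
    by (simp add: block_slice_def)
  show ?thesis
  proof (intro equalityI subsetI)
    fix y assume "y \<in> g j ` block_slice m b W j"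
    then show "y \<in> block_slice m b W1 j" using iff by (auto simp: block_slice_def)
  next
    fix y assume y: "y \<in> block_slice m b W1 j"
    then obtain z where "z \<in> Vec m" "y = g j z"
      using g_image[OF j] by (auto simp: block_slice_def)
    then show "y \<in> g j ` block_slice m b W j" using iff y by blast
  qed
qed

lemma derivative_mem_W1:
  assumes v: "v \<in> Vec (m * b)" and w: "w \<in> W" and "\<gamma> v \<in> U"
  shows "vadd (\<gamma> (vadd v w)) (\<gamma> v) \<in> W1"
proof -
  have "vadd v w \<in> coset W v" using w by (simp add: mem_coset_iff vadd_ac)
  then have "\<gamma> (vadd v w) \<in> coset W1 (\<gamma> v)"
    using image_coset_W_of_U[OF assms(1,3)] by blast
  then show ?thesis by (simp add: mem_coset_iff)
qed

(* e + w and e lie in one coset of W, mapped into W1 + \<gamma> e, while \<gamma>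
   changes only block j between e + w and w, where w is mapped into W1. *)
lemma block_derivative_mem:
  assumes j: "j < b" and w: "w \<in> W" and x: "x \<in> Vec m"
    and U_x: "block_emb m b j (g j x) \<in> U"
  shows "vadd (g j (vadd x (block_proj m j w))) (g j x)
           \<in> coset (block_slice m b W1 j) (g j (block_proj m j w))"
proof -
  define a where "a = block_proj m j w"
  define e where "e = block_emb m b j x"
  have xa: "vadd x a \<in> Vec m" using x block_proj_Vec by (simp add: a_def Vec_vadd)
  have \<gamma>e: "\<gamma> e = block_emb m b j (g j x)" by (simp add: e_def \<gamma>_block_emb[OF j x])
  have single_block: "vadd (\<gamma> (vadd e w)) (\<gamma> w) = block_emb m b j (vadd (g j (vadd x a)) (g j a))"
    using vadd_parallel_single_block[where m = m and x = "vadd e w" and y = w and g = g, OF j] j x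
    by (simp add: e_def a_def block_proj_vadd block_proj_block_emb_other)
  have "vadd (\<gamma> (vadd e w)) (\<gamma> e) \<in> W1"
    by (rule derivative_mem_W1) (use w U_x \<gamma>e in \<open>simp_all add: e_def block_emb_Vec\<close>)
  then have "vadd (vadd (\<gamma> (vadd e w)) (\<gamma> w)) (\<gamma> e) \<in> W1"
    using f2subspace_vadd[OF W1(1)] image_W w by (metis imageI vadd_right_comm)
  then have "block_emb m b j (vadd (vadd (g j (vadd x a)) (g j a)) (g j x)) \<in> W1"
    by (simp add: single_block \<gamma>e block_emb_vadd)
  then have "block_emb m b j (vadd (vadd (g j (vadd x a)) (g j x)) (g j a)) \<in> W1"
    by (metis vadd_right_comm)
  moreover have "vadd (vadd (g j (vadd x a)) (g j x)) (g j a) \<in> Vec m"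
    using g_Vec[OF j] x xa block_proj_Vec by (simp add: a_def Vec_vadd)
  ultimately show ?thesis by (simp add: a_def block_slice_def mem_coset_iff)
qed

lemma card_preimage_block_slice_U:
  assumes j: "j < b"
  shows "card {x \<in> Vec m. g j x \<in> block_slice m b U j} = card (block_slice m b U j)"
proof -
  have "g j ` {x \<in> Vec m. g j x \<in> block_slice m b U j} = block_slice m b U j"
    using g_image[OF j] by (auto simp: block_slice_def)
  then show ?thesis
    using card_image[OF inj_on_subset[OF g_inj[OF j]]] by (metis (no_types, lifting) mem_Collect_eq subsetI)
qed

lemma card_block_slice_U_le:
  assumes j: "j < b" and du: "diff_uniform m (g j) d"
    and w: "w \<in> W" "block_proj m j w \<noteq> vzero"
  shows "card (block_slice m b U j) \<le> d * card (block_slice m b W1 j)"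
proof -
  let ?a = "block_proj m j w" and ?B = "block_slice m b W1 j"
  have "card {x \<in> Vec m. g j x \<in> block_slice m b U j} \<le> d * card (coset ?B (g j ?a))"
  proof (rule diff_uniform_card_le[OF du block_proj_Vec w(2)])
    show "coset ?B (g j ?a) \<subseteq> Vec m"
      using coset_subset_Vec[OF f2subspace_block_slice[OF W1(1)] g_Vec[OF j block_proj_Vec]] .
  qed (use block_derivative_mem[OF j w(1)] in \<open>auto simp: block_slice_def\<close>)
  then show ?thesis by (simp add: card_coset card_preimage_block_slice_U[OF j])
qed

lemma card_block_slice_U_le_punctured:
  assumes j: "j < b" and du: "diff_uniform m (g j) d"
    and a: "a \<in> block_slice m b W j" "a \<noteq> vzero"
  shows "card (block_slice m b U j) \<le> d * (card (block_slice m b W1 j) - 1)"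
proof -
  let ?B = "block_slice m b W1 j"
  have aV: "a \<in> Vec m" and w: "block_emb m b j a \<in> W" using a by (auto simp: block_slice_def)
  have "g j a \<in> ?B" using a(1) image_block_slice[OF j] by blast
  then have coset_B: "coset ?B (g j a) = ?B"
    using coset_eq_of_mem[where x = vzero and v = "g j a", OF f2subspace_block_slice[OF W1(1)]]
    by (simp add: mem_coset_iff vadd_comm)
  have "card {x \<in> Vec m. g j x \<in> block_slice m b U j} \<le> d * card (?B - {vzero})"
  proof (rule diff_uniform_card_le[OF du aV a(2)])
    fix x assume x: "x \<in> {x \<in> Vec m. g j x \<in> block_slice m b U j}"
    then have "vadd (g j (vadd x a)) (g j x) \<in> ?B"
      using block_derivative_mem[OF j w] aV j coset_B by (simp add: block_slice_def)
    moreover have "g j (vadd x a) \<noteq> g j x"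
      using inj_onD[OF g_inj[OF j]] x aV a(2) Vec_vadd
      by (metis (no_types, lifting) mem_Collect_eq vadd_cancel(1) vadd_vzero(1))
    ultimately show "vadd (g j (vadd x a)) (g j x) \<in> ?B - {vzero}"
      by (simp add: vadd_eq_vzero_iff)
  qed (auto simp: block_slice_def)
  then show ?thesis
    using vzero_in_block_slice[OF W1(1)] f2subspace_finite[OF f2subspace_block_slice[OF W1(1)]]
    by (simp add: card_preimage_block_slice_U[OF j])
qed

(* U has index 2 in V, so its trace on a block has index at most 2. *)
lemma card_block_slice_U_ge: "j < b \<Longrightarrow> 2 ^ m \<le> 2 * card (block_slice m b U j)"
proof (rule card_index_two_subspace[OF f2subspace_block_slice[OF U]])
  fix x y assume "x \<in> Vec m - block_slice m b U j" "y \<in> Vec m - block_slice m b U j"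
  then show "vadd x y \<in> block_slice m b U j"
    using hyperplane_vadd_outside[OF U card_U] block_emb_Vec
    by (auto simp: block_slice_def block_emb_vadd Vec_vadd)
qed

lemma block_slice_W1_small_or_full:
  assumes j: "j < b" and sai: "strongly_anti_invariant m (g j) s"
  shows "int (f2dim (block_slice m b W1 j)) < int m - s
    \<or> block_slice m b W j = Vec m \<and> block_slice m b W1 j = Vec m"
  using sai f2subspace_block_slice[OF W] f2subspace_block_slice[OF W1(1)] image_block_slice[OF j]
  unfolding strongly_anti_invariant_def by metis

lemma block_slice_W_vzero_on_J:
  assumes J: "j \<in> J_set m b U" and r: "r < m - 1"
    and du: "diff_uniform m (g j) (2 ^ r)" and sai: "strongly_anti_invariant m (g j) (int r)"
  shows "block_slice m b W j = {vzero}"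
proof (rule ccontr)
  let ?B = "block_slice m b W1 j"
  have j: "j < b" using J by (simp add: J_set_def)
  assume "block_slice m b W j \<noteq> {vzero}"
  then obtain a where a: "a \<in> block_slice m b W j" "a \<noteq> vzero"
    using vzero_in_block_slice[OF W] by blast
  have U_le: "card (block_slice m b U j) \<le> 2 ^ r * (card ?B - 1)"
    by (rule card_block_slice_U_le_punctured[OF j du a])
  from block_slice_W1_small_or_full[OF j sai] show False
  proof
    assume "int (f2dim ?B) < int m - int r"
    moreover have "0 < card ?B"
      using vzero_in_block_slice[OF W1(1)] f2subspace_finite[OF f2subspace_block_slice[OF W1(1)]]
      by (auto simp: card_gt_0_iff)
    ultimately have "2 * (2 ^ r * (card ?B - 1)) < 2 ^ m"
      by (intro two_mult_pow_mult_less_pow[where c = "card ?B" and e = "f2dim ?B"])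
        (simp_all add: card_f2dim[OF f2subspace_block_slice[OF W1(1)]])
    then show False using U_le card_block_slice_U_ge[OF j] by linarith
  next
    assume "block_slice m b W j = Vec m \<and> ?B = Vec m"
    then have "Vec m \<subseteq> block_slice m b U j" using block_slice_mono[OF W1(2), of m b j] by simp
    then have "block_slice m b U j = Vec m" by (auto simp: block_slice_def)
    then show False using J block_slice_eq_Vec_iff[OF m_pos j] by blast
  qed
qed

lemma W_vanishes_on_J:
  assumes J: "j \<in> J_set m b U" and r: "r < m - 1"
    and du: "diff_uniform m (g j) (2 ^ r)" and sai: "strongly_anti_invariant m (g j) (int r)"
    and w: "w \<in> W"
  shows "block_proj m j w = vzero"
proof (rule ccontr)
  assume w_j: "block_proj m j w \<noteq> vzero"
  have j: "j < b" using J by (simp add: J_set_def)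
  have "block_slice m b W1 j = {vzero}"
    using image_block_slice[OF j] block_slice_W_vzero_on_J[OF J r du sai] g_vzero[OF j] by simp
  then have "card (block_slice m b U j) \<le> 2 ^ r * 1"
    using card_block_slice_U_le[OF j du w w_j] by simp
  moreover have "2 * (2 ^ r * 1) < (2::nat) ^ m"
    using r by (intro two_mult_pow_mult_less_pow[where c = 2 and e = 1]) simp_all
  ultimately show False using card_block_slice_U_ge[OF j] by linarith
qed

lemma block_slice_W_full_off_J:
  assumes j: "j < b" "j \<notin> J_set m b U" and r: "r < m"
    and du: "diff_uniform m (g j) (2 ^ r)" and sai: "strongly_anti_invariant m (g j) (int r - 1)"
    and w: "w \<in> W" "block_proj m j w \<noteq> vzero"
  shows "block_slice m b W j = Vec m"
proof -
  let ?B = "block_slice m b W1 j"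
  have "block_slice m b U j = Vec m" using block_slice_eq_Vec_iff[OF m_pos j(1), of U] j(2) by simp
  then have U_full: "2 ^ (m + 1) = 2 * card (block_slice m b U j)" by (simp add: card_Vec)
  have "block_slice m b W j \<noteq> {vzero}"
  proof
    assume "block_slice m b W j = {vzero}"
    then have "?B = {vzero}" using image_block_slice[OF j(1)] g_vzero[OF j(1)] by simp
    then have "card (block_slice m b U j) \<le> 2 ^ r * 1"
      using card_block_slice_U_le[OF j(1) du w] by simp
    moreover have "2 * (2 ^ r * 1) < (2::nat) ^ (m + 1)"
      using r by (intro two_mult_pow_mult_less_pow[where c = 2 and e = 1]) simp_all
    ultimately show False using U_full by linarith
  qed
  then obtain a where a: "a \<in> block_slice m b W j" "a \<noteq> vzero"
    using vzero_in_block_slice[OF W] by blast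
  have U_le: "card (block_slice m b U j) \<le> 2 ^ r * (card ?B - 1)"
    by (rule card_block_slice_U_le_punctured[OF j(1) du a])
  from block_slice_W1_small_or_full[OF j(1) sai] show ?thesis
  proof
    assume "int (f2dim ?B) < int m - (int r - 1)"
    moreover have "0 < card ?B"
      using vzero_in_block_slice[OF W1(1)] f2subspace_finite[OF f2subspace_block_slice[OF W1(1)]]
      by (auto simp: card_gt_0_iff)
    ultimately have "2 * (2 ^ r * (card ?B - 1)) < 2 ^ (m + 1)"
      by (intro two_mult_pow_mult_less_pow[where c = "card ?B" and e = "f2dim ?B"])
        (simp_all add: card_f2dim[OF f2subspace_block_slice[OF W1(1)]])
    then show ?thesis using U_le U_full by linarith
  qed simp
qed

lemma W1_eq_W_if_blocks: "W = blocks m b I \<Longrightarrow> W1 = W"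
  using \<gamma>_image_coset_blocks[of vzero I] image_W parallel_vzero
  by simp

lemma LA_eq_L_if_blocks:
  assumes "W = blocks m b I"
  shows "LApart U W1 W2 vbar = Lpart (m * b) W"
proof -
  have "LApart U W1 W2 vbar = (\<lambda>v. \<gamma> ` coset W v) ` Vec (m * b)"
    using maps by (simp add: maps_partition_def Lpart_def image_image)
  also have "\<dots> = coset W ` (\<gamma> ` Vec (m * b))"
    using \<gamma>_image_coset_blocks assms by (simp add: image_image)
  finally show ?thesis by (simp add: \<gamma>_image_Vec Lpart_def)
qed

lemma W2_eq_W_if_LA_eq_L:
  assumes "LApart U W1 W2 vbar = Lpart (m * b) W"
  shows "W2 = W"
proof -
  have "vzero \<in> U" using U by (simp add: f2subspace_def)
  then have "coset W2 vbar \<in> LApart U W1 W2 vbar"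
    unfolding LApart_def by (metis coset_vzero image_eqI UnI2)
  then have "coset W2 vbar \<in> Lpart (m * b) W" using assms by simp
  then obtain v where "coset W2 vbar = coset W v" by (auto simp: Lpart_def)
  moreover have "vbar \<in> coset W2 vbar" by (rule self_in_coset[OF W2(1)])
  ultimately have "coset W2 vbar = coset W vbar" using coset_eq_of_mem[OF W] by metis
  then show ?thesis by (rule coset_cancel)
qed

lemma LA_trivial_if_W_vzero:
  assumes "W = {vzero}"
  shows "trivial_partition (Vec (m * b)) (LApart U W1 W2 vbar)"
proof -
  have "LApart U W1 W2 vbar = (\<lambda>v. {\<gamma> v}) ` Vec (m * b)"
    using maps assms by (simp add: maps_partition_def Lpart_def image_image coset_def)
  also have "\<dots> = (\<lambda>v. {v}) ` (\<gamma> ` Vec (m * b))" by (simp add: image_image)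
  finally show ?thesis by (simp add: \<gamma>_image_Vec trivial_partition_def)
qed

lemma W_ne_Vec: "W \<noteq> Vec (m * b)"
  using image_W \<gamma>_image_Vec W1(2) vbar by auto

end

theorem corollary3p9:
  fixes m b :: nat
    and g :: "nat \<Rightarrow> (nat \<Rightarrow> bit) \<Rightarrow> (nat \<Rightarrow> bit)"
    and U W W1 W2 :: "(nat \<Rightarrow> bit) set"
    and vbar :: "nat \<Rightarrow> bit"
  assumes "m > 1" and "b > 1"
    and perm: "\<And>i. i < b \<Longrightarrow> bij_betw (g i) (Vec m) (Vec m)"
    and zero: "parallel m b g vzero = vzero"
    and U: "f2subspace (m * b) U" "f2dim U = m * b - 1"
    and notJ: "\<And>i. i < b \<Longrightarrow> i \<notin> J_set m b U \<Longrightarrow>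
        \<exists>r. r < m \<and> diff_uniform m (g i) (2 ^ r)
            \<and> strongly_anti_invariant m (g i) (int r - 1)"
    and inJ: "\<And>j. j \<in> J_set m b U \<Longrightarrow>
        \<exists>r. r < m - 1 \<and> diff_uniform m (g j) (2 ^ r)
            \<and> strongly_anti_invariant m (g j) (int r)"
    and W: "f2subspace (m * b) W"
    and W1: "f2subspace (m * b) W1" "W1 \<subseteq> U"
    and W2: "f2subspace (m * b) W2" "W2 \<subseteq> U"
    and vbar: "vbar \<in> Vec (m * b)" "vbar \<notin> U"
    and maps: "maps_partition (parallel m b g) (Lpart (m * b) W) (LApart U W1 W2 vbar)"
    and nontriv: "\<not> trivial_partition (Vec (m * b)) (LApart U W1 W2 vbar)"
  shows "is_wall m b W \<and> is_wall m b W1 \<and> is_wall m b W2 \<and> W = W1 \<and> W1 = W2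
         \<and> linear_partition (m * b) (LApart U W1 W2 vbar)"
proof -
  have m: "0 < m" using \<open>m > 1\<close> by simp
  have card_U: "2 * card U = 2 ^ (m * b)"
    using card_f2dim[OF U(1)] U(2) \<open>m > 1\<close> \<open>b > 1\<close> by (cases "m * b") simp_all
  interpret parallel_onto_LA m b g U W W1 W2 vbar
    using m perm zero U(1) card_U W W1 W2 vbar maps by unfold_locales
  define I where "I = block_support m b W"
  have full: "block_slice m b W j = Vec m" if j_I: "j \<in> I" for j
  proof -
    obtain w where j: "j < b" and w: "w \<in> W" "block_proj m j w \<noteq> vzero"
      using j_I by (auto simp: I_def block_support_def)
    then have "j \<notin> J_set m b U" using inJ W_vanishes_on_J by metis
    then show ?thesis using notJ[OF j] block_slice_W_full_off_J[OF j] w by blast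
  qed
  have W_I: "W = blocks m b I"
    unfolding I_def by (rule subspace_eq_blocks_support[OF m W]) (use full in \<open>simp add: I_def\<close>)
  have "I \<noteq> {}" using nontriv LA_trivial_if_W_vzero W_I blocks_empty by auto
  moreover have "I \<noteq> {..<b}" using W_ne_Vec W_I blocks_all by auto
  moreover have "I \<subseteq> {..<b}" by (auto simp: I_def block_support_def)
  ultimately have wall: "is_wall m b W" using W_I by (auto simp: is_wall_def)
  have LA: "LApart U W1 W2 vbar = Lpart (m * b) W" by (rule LA_eq_L_if_blocks[OF W_I])
  show ?thesis
    using wall W1_eq_W_if_blocks[OF W_I] W2_eq_W_if_LA_eq_L[OF LA] LA W
    by (auto simp: linear_partition_def)
qed

end
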